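(* For every integer $N$, define $$f_0=q^{N}\frac{\phi_{N-1}(y,z)\,\phi_N(y/q,z)}{\phi_{N-1}(y/q,z)\,\phi_N(y,z)},\qquad f_1=\frac{\phi_{N-1}(y/q,z/q)\,\phi_N(y,z)}{\phi_{N-1}(y,z)\,\phi_N(y/q,z/q)}.$$ Then $$1+z f_0=(1+z)\frac{\phi_{N-1}(y/q,z/q)\phi_N(y,qz)}{\phi_{N-1}(y/q,z)\phi_N(y,z)},$$ $$1+\frac{1}{z}f_0=q^{N}\left(1+\frac1z\right)\frac{\phi_{N-1}(y,qz)\phi_N(y/q,z/q)}{\phi_{N-1}(y/q,z)\phi_N(y,z)},$$ $$1+\frac{y}{z}f_1=\left(1+\frac yz\right)\frac{\phi_{N-1}(y/q,z)\phi_N(y,z/q)}{\phi_{N-1}(y,z)\phi_N(y/q,z/q)},$$ $$1+\frac{z}{y}f_1=\left(1+\frac zy\right)\frac{\phi_{N-1}(y,z/q)\phi_N(y/q,z)}{\phi_{N-1}(y,z)\phi_N(y/q,z/q)}.$$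
   Context: $q$ is a fixed nonzero complex constant that is not a root of unity; $y,z$ are variables. For $k\in\mathbb{Z}$ the polynomials $p_k(y,z)$ are defined by the generating function $\sum_{n\ge 0}p_n(y,z)t^n=\frac{(-(1-q)t;q)_\infty}{((1-q)yt;q)_\infty((1-q)zt;q)_\infty}$, with $(a;q)_\infty=\prod_{i\ge0}(1-aq^i)$, and $p_k=0$ for $k<0$; equivalently $p_n(y,z)=(1-q)^n\sum_{a+b+c=n}\frac{y^a z^b q^{c(c-1)/2}}{(q;q)_a(q;q)_b(q;q)_c}$ with $(q;q)_m=\prod_{j=1}^m(1-q^j)$. For $N>0$, $\phi_N(y,z)=\det\big(p_{N-2i+j+1}(y,z)\big)_{i,j=1}^N$; $\phi_0=1$; for $N<0$, $\phi_N=(-1)^{N(N+1)/2}\phi_{-N-1}$. *)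

theory Defs
  imports Complex_Main "Jordan_Normal_Form.Determinant"
begin

definition qpoch :: "complex \<Rightarrow> nat \<Rightarrow> complex" where
  "qpoch q m = (\<Prod>j=1..m. (1 - q ^ j))"

definition pnat :: "complex \<Rightarrow> nat \<Rightarrow> complex \<Rightarrow> complex \<Rightarrow> complex" where
  "pnat q n y z = (1 - q) ^ n *
     (\<Sum>a\<le>n. \<Sum>b\<le>n - a. let c = n - a - b in
        y ^ a * z ^ b * q ^ (c * (c - 1) div 2) / (qpoch q a * qpoch q b * qpoch q c))"

definition pint :: "complex \<Rightarrow> int \<Rightarrow> complex \<Rightarrow> complex \<Rightarrow> complex" where
  "pint q k y z = (if k < 0 then 0 else pnat q (nat k) y z)"

text \<open>phi_N for N >= 0: det (p_{N-2i+j+1})_{i,j=1..N}; with 0-based indices i,j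
  the entry is p_{N-2i+j}. det of the 0x0 matrix is 1.\<close>
definition phinat :: "complex \<Rightarrow> nat \<Rightarrow> complex \<Rightarrow> complex \<Rightarrow> complex" where
  "phinat q n y z = det (mat n n (\<lambda>(i, j). pint q (int n - 2 * int i + int j) y z))"

definition phi :: "complex \<Rightarrow> int \<Rightarrow> complex \<Rightarrow> complex \<Rightarrow> complex" where
  "phi q N y z = (if N \<ge> 0 then phinat q (nat N) y z
     else (-1) ^ nat (N * (N + 1) div 2) * phinat q (nat (- N - 1)) y z)"

end

theory Submission
  imports Defs "HOL-Computational_Algebra.Formal_Power_Series"
begin

text \<open>The generating series of the \<open>p\<^sub>n(y, z)\<close> is a product of \<open>q\<close>-exponentials, and their
  \<open>q\<close>-difference equations show that \<open>y \<mapsto> q y\<close> and \<open>z \<mapsto> q z\<close> multiply it by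
  \<open>1 - (1 - q) y t\<close> and \<open>1 - (1 - q) z t\<close>, while \<open>(y, z) \<mapsto> (q y, q z)\<close> amounts to
  \<open>t \<mapsto> q t\<close> followed by multiplication with \<open>1 + (1 - q) t\<close>. Moreover \<open>\<phi>\<^sub>N\<close> is the
  Jacobi-Trudi determinant of the staircase partition in the coefficients of this series.
  For every series \<open>F\<close> with constant term 1, the three-term Pluecker relation of a bordered
  \<open>(N + 2) \<times> (N + 2)\<close> matrix built from \<open>F\<close> yields bilinear identities between the staircase
  determinants of \<open>F\<close>, \<open>(1 - a t) F\<close>, \<open>(1 - b t) F\<close> and \<open>(1 - a t) (1 - b t) F\<close>. These
  determinants do not change under multiplication by \<open>1 - c t\<^sup>2\<close> and acquire the factor
  \<open>q\<^bsup>N(N+1)/2\<^esup>\<close> under \<open>t \<mapsto> q t\<close>, so suitable choices of \<open>a\<close> and \<open>b\<close> give the four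
  identities for \<open>N > 0\<close>. The case \<open>N = 0\<close> is trivial, and \<open>N < 0\<close> follows from the symmetry
  \<open>\<phi>\<^sub>-\<^sub>N\<^sub>-\<^sub>1 = \<plusminus>\<phi>\<^sub>N\<close>, which exchanges \<open>q\<^sup>N\<close> and \<open>q\<^sup>-\<^sup>N\<close>.\<close>

section \<open>Determinants\<close>

lemma mat_delete_mat:
  "mat_delete (mat (Suc n) (Suc n) f) r c =
     mat n n (\<lambda>(i,j). f (if i < r then i else Suc i, if j < c then j else Suc j))"
  by (rule eq_matI) (auto simp: mat_delete_def)

lemma det_single_nonzero_in_row:
  assumes A: "A \<in> carrier_mat n n" and r: "r < n" and c: "c < n"
    and zero: "\<And>j. j < n \<Longrightarrow> j \<noteq> c \<Longrightarrow> A $$ (r,j) = 0"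
  shows "det A = A $$ (r,c) * cofactor A r c"
proof -
  have "det A = (\<Sum>j<n. A $$ (r,j) * cofactor A r j)"
    by (rule laplace_expansion_row[OF A r])
  also have "\<dots> = (\<Sum>j<n. if j = c then A $$ (r,c) * cofactor A r c else 0)"
    by (rule sum.cong) (auto simp: zero)
  also have "\<dots> = A $$ (r,c) * cofactor A r c" using c by simp
  finally show ?thesis .
qed

lemma det_mat_single_nonzero_in_column:
  assumes r: "r < Suc n" and c: "c < Suc n"
    and zero: "\<And>i. i < Suc n \<Longrightarrow> i \<noteq> r \<Longrightarrow> f (i,c) = 0"
  shows "det (mat (Suc n) (Suc n) f) = f (r,c) * (-1)^(r+c) *
           det (mat n n (\<lambda>(i,j). f (if i < r then i else Suc i, if j < c then j else Suc j)))"
proof -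
  let ?A = "mat (Suc n) (Suc n) f"
  have "det ?A = (\<Sum>i<Suc n. ?A $$ (i,c) * cofactor ?A i c)"
    by (rule laplace_expansion_column) (use c in auto)
  also have "\<dots> = (\<Sum>i<Suc n. if i = r then ?A $$ (r,c) * cofactor ?A r c else 0)"
    by (rule sum.cong) (use c zero in auto)
  also have "\<dots> = ?A $$ (r,c) * cofactor ?A r c" using r by simp
  finally show ?thesis unfolding cofactor_def mat_delete_mat using r c by simp
qed

lemma det_sub_prev_column:
  fixes A :: "'a::comm_ring_1 mat"
  assumes A: "A \<in> carrier_mat n n"
  shows "det (mat n n (\<lambda>(i,j). if j = 0 then A $$ (i,0) else A $$ (i,j) - a * A $$ (i,j-1))) = det A"
proof -
  define U :: "'a mat" where "U = mat n n (\<lambda>(i,j). if i = j then 1 else if Suc i = j then -a else 0)"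
  have U: "U \<in> carrier_mat n n" unfolding U_def by simp
  have "det U = 1"
    using det_upper_triangular[of U n] U by (simp add: upper_triangular_def prod_list_diag_prod U_def)
  moreover have "A * U = mat n n (\<lambda>(i,j). if j = 0 then A $$ (i,0) else A $$ (i,j) - a * A $$ (i,j-1))"
  proof (rule eq_matI)
    fix i j assume "i < dim_row (mat n n (\<lambda>(i,j). if j = 0 then A $$ (i,0) else A $$ (i,j) - a * A $$ (i,j-1)))"
      and "j < dim_col (mat n n (\<lambda>(i,j). if j = 0 then A $$ (i,0) else A $$ (i,j) - a * A $$ (i,j-1)))"
    hence i: "i < n" and j: "j < n" by auto
    have "(A * U) $$ (i,j) = (\<Sum>k<n. A $$ (i,k) * U $$ (k,j))"
      using A U i j by (simp add: scalar_prod_def lessThan_atLeast0)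
    also have "\<dots> = (\<Sum>k<n. (if k = j then A $$ (i,k) else 0) + (if Suc k = j then - a * A $$ (i,k) else 0))"
      by (rule sum.cong) (auto simp: U_def j)
    also have "\<dots> = (if j = 0 then A $$ (i,0) else A $$ (i,j) - a * A $$ (i,j-1))"
      unfolding sum.distrib using j by (cases j) (auto simp: sum.delta)
    finally show "(A * U) $$ (i,j) = mat n n (\<lambda>(i,j). if j = 0 then A $$ (i,0) else A $$ (i,j) - a * A $$ (i,j-1)) $$ (i,j)"
      using i j by simp
  qed (use A U in auto)
  ultimately show ?thesis using det_mult[OF A U] by simp
qed

text \<open>Subtracting \<open>a\<close> times the previous column clears a geometric row \<open>c a\<^sup>e, c a\<^sup>e\<^sup>+\<^sup>1, \<dots>\<close>
  except for its first entry.\<close>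

lemma det_geometric_first_row:
  fixes f :: "nat \<Rightarrow> nat \<Rightarrow> 'a::comm_ring_1"
  shows "det (mat (Suc n) (Suc n) (\<lambda>(i,j). if i = 0 then c * a^(e+j) else f (i-1) j))
       = c * a^e * det (mat n n (\<lambda>(i,j). f i (Suc j) - a * f i j))"
proof -
  let ?A = "mat (Suc n) (Suc n) (\<lambda>(i,j). if i = 0 then c * a^(e+j) else f (i-1) j)"
  let ?B = "mat (Suc n) (Suc n) (\<lambda>(i,j). if j = 0 then ?A $$ (i,0) else ?A $$ (i,j) - a * ?A $$ (i,j-1))"
  have "det ?A = det ?B" by (rule det_sub_prev_column[symmetric]) simp
  also have "\<dots> = ?B $$ (0,0) * cofactor ?B 0 0"
  proof (rule det_single_nonzero_in_row)
    fix j assume j: "j < Suc n" "j \<noteq> 0"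
    then obtain j' where "j = Suc j'" by (cases j) auto
    thus "?B $$ (0,j) = 0" using j by (simp add: algebra_simps)
  qed auto
  also have "\<dots> = c * a^e * det (mat n n (\<lambda>(i,j). f i (Suc j) - a * f i j))"
  proof -
    have "mat_delete ?B 0 0 = mat n n (\<lambda>(i,j). f i (Suc j) - a * f i j)"
      by (rule eq_matI) (auto simp: mat_delete_def)
    thus ?thesis by (simp add: cofactor_def)
  qed
  finally show ?thesis .
qed

lemma det_geometric_last_row:
  fixes f :: "nat \<Rightarrow> nat \<Rightarrow> 'a::comm_ring_1"
  shows "det (mat (Suc n) (Suc n) (\<lambda>(i,j). if i = n then c * a^(e+j) else f i j))
       = (-1)^n * c * a^e * det (mat n n (\<lambda>(i,j). f i (Suc j) - a * f i j))"
proof -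
  let ?A = "mat (Suc n) (Suc n) (\<lambda>(i,j). if i = n then c * a^(e+j) else f i j)"
  let ?B = "mat (Suc n) (Suc n) (\<lambda>(i,j). if j = 0 then ?A $$ (i,0) else ?A $$ (i,j) - a * ?A $$ (i,j-1))"
  have "det ?A = det ?B" by (rule det_sub_prev_column[symmetric]) simp
  also have "\<dots> = ?B $$ (n,0) * cofactor ?B n 0"
  proof (rule det_single_nonzero_in_row)
    fix j assume j: "j < Suc n" "j \<noteq> 0"
    then obtain j' where "j = Suc j'" by (cases j) auto
    thus "?B $$ (n,j) = 0" using j by (simp add: algebra_simps)
  qed auto
  also have "\<dots> = (-1)^n * c * a^e * det (mat n n (\<lambda>(i,j). f i (Suc j) - a * f i j))"
  proof -
    have "mat_delete ?B n 0 = mat n n (\<lambda>(i,j). f i (Suc j) - a * f i j)"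
      by (rule eq_matI) (auto simp: mat_delete_def)
    thus ?thesis by (simp add: cofactor_def)
  qed
  finally show ?thesis .
qed

lemma det_mat_scale_rows_cols:
  "det (mat n n (\<lambda>(i,j). r i * c j * f (i,j))) = (\<Prod>i<n. r i) * (\<Prod>j<n. c j) * det (mat n n f)"
proof -
  have "det (mat n n (\<lambda>(i,j). r i * c j * f (i,j)))
      = (\<Sum>p\<in>{p. p permutes {0..<n}}. signof p * (\<Prod>i=0..<n. r i * c (p i) * f (i, p i)))"
    unfolding det_def by (auto intro!: sum.cong prod.cong simp: permutes_in_image)
  also have "\<dots> = (\<Sum>p\<in>{p. p permutes {0..<n}}. (\<Prod>i<n. r i) * (\<Prod>j<n. c j) * (signof p * (\<Prod>i=0..<n. f (i, p i))))"
  proof (rule sum.cong[OF refl])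
    fix p assume "p \<in> {p. p permutes {0..<n}}"
    hence "(\<Prod>i=0..<n. c (p i)) = (\<Prod>j=0..<n. c j)"
      using prod.permute[of p "{0..<n}" c] by (simp add: comp_def)
    thus "signof p * (\<Prod>i=0..<n. r i * c (p i) * f (i, p i))
        = (\<Prod>i<n. r i) * (\<Prod>j<n. c j) * (signof p * (\<Prod>i=0..<n. f (i, p i)))"
      by (simp add: prod.distrib lessThan_atLeast0 algebra_simps)
  qed
  also have "\<dots> = (\<Prod>i<n. r i) * (\<Prod>j<n. c j) * det (mat n n f)"
    unfolding det_def by (simp add: sum_distrib_left)
  finally show ?thesis .
qed

lemma det_nonzero_rows_independent:
  fixes A :: "'a::idom mat"
  assumes A: "A \<in> carrier_mat n n" and nz: "det A \<noteq> 0"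
    and comb: "\<And>k. k < n \<Longrightarrow> (\<Sum>i<n. A $$ (i,k) * g i) = 0" and i: "i < n"
  shows "g i = 0"
proof -
  have "transpose_mat A *\<^sub>v vec n g = 0\<^sub>v n"
  proof (rule eq_vecI)
    fix k assume "k < dim_vec (0\<^sub>v n :: 'a vec)"
    then have k: "k < n" by simp
    have "(transpose_mat A *\<^sub>v vec n g) $ k = (\<Sum>i<n. A $$ (i,k) * g i)"
      using A k by (simp add: scalar_prod_def lessThan_atLeast0)
    then show "(transpose_mat A *\<^sub>v vec n g) $ k = 0\<^sub>v n $ k" using comb[OF k] k by simp
  qed (use A in simp)
  moreover have "det (transpose_mat A) \<noteq> 0" using nz det_transpose[OF A] by simp
  moreover have "transpose_mat A \<in> carrier_mat n n" using A by simp
  ultimately have "vec n g = 0\<^sub>v n"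
    using det_0_iff_vec_prod_zero[of "transpose_mat A" n] vec_carrier[of n g] by blast
  then show ?thesis using i by (metis index_vec index_zero_vec(1))
qed

section \<open>Bordered determinants and the three-term Pluecker relation\<close>

definition bordered_mat ::
  "nat \<Rightarrow> (nat \<Rightarrow> nat \<Rightarrow> 'a) \<Rightarrow> (nat \<Rightarrow> 'a) \<Rightarrow> (nat \<Rightarrow> 'a) \<Rightarrow> 'a mat" where
  "bordered_mat n B x y = mat n n (\<lambda>(i,j). if j = 0 then x i else if j = n - 1 then y i else B j i)"

definition bordered_det ::
  "nat \<Rightarrow> (nat \<Rightarrow> nat \<Rightarrow> 'a::comm_ring_1) \<Rightarrow> (nat \<Rightarrow> 'a) \<Rightarrow> (nat \<Rightarrow> 'a) \<Rightarrow> 'a" where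
  "bordered_det n B x y = det (bordered_mat n B x y)"

lemma bordered_mat_carrier [simp]: "bordered_mat n B x y \<in> carrier_mat n n"
  unfolding bordered_mat_def by simp

lemma bordered_det_swap:
  assumes n: "2 \<le> n"
  shows "bordered_det n B x y = - bordered_det n B y x"
proof -
  have "swapcols 0 (n-1) (bordered_mat n B x y) = bordered_mat n B y x"
    by (rule eq_matI) (use n in \<open>auto simp: bordered_mat_def\<close>)
  moreover have "det (swapcols 0 (n-1) (bordered_mat n B x y)) = - det (bordered_mat n B x y)"
    by (rule det_swapcols) (use n in auto)
  ultimately show ?thesis unfolding bordered_det_def by simp
qed

lemma bordered_det_same:
  assumes n: "2 \<le> n"
  shows "bordered_det n B x x = 0"
  unfolding bordered_det_def
  by (rule det_identical_columns[of _ n 0 "n-1"], simp)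
     (use n in \<open>auto intro!: eq_vecI simp: bordered_mat_def\<close>)

lemma bordered_det_inner_column:
  assumes n: "2 \<le> n" and k: "0 < k" "k < n - 1"
  shows "bordered_det n B x (B k) = 0"
  unfolding bordered_det_def
  by (rule det_identical_columns[of _ n k "n-1"], simp)
     (use n k in \<open>auto intro!: eq_vecI simp: bordered_mat_def\<close>)

lemma bordered_det_linear:
  assumes n: "2 \<le> n"
  shows "bordered_det n B x y = (\<Sum>i<n. y i * cofactor (bordered_mat n B x (\<lambda>_. 0)) i (n - 1))"
proof -
  have "bordered_det n B x y
      = (\<Sum>i<n. bordered_mat n B x y $$ (i, n-1) * cofactor (bordered_mat n B x y) i (n-1))"
    unfolding bordered_det_def by (rule laplace_expansion_column) (use n in auto)
  also have "\<dots> = (\<Sum>i<n. y i * cofactor (bordered_mat n B x (\<lambda>_. 0)) i (n - 1))"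
  proof (rule sum.cong[OF refl])
    fix i assume i: "i \<in> {..<n}"
    have "mat_delete (bordered_mat n B x y) i (n-1) = mat_delete (bordered_mat n B x (\<lambda>_. 0)) i (n-1)"
      by (rule eq_matI) (use n in \<open>auto simp: bordered_mat_def mat_delete_def\<close>)
    thus "bordered_mat n B x y $$ (i, n-1) * cofactor (bordered_mat n B x y) i (n-1)
        = y i * cofactor (bordered_mat n B x (\<lambda>_. 0)) i (n - 1)"
      using i n unfolding cofactor_def by (simp add: bordered_mat_def)
  qed
  finally show ?thesis .
qed

text \<open>For fixed \<open>a, b, c\<close> the left-hand side is a linear form in \<open>d\<close> that vanishes on every
  column of the invertible matrix \<open>bordered_mat n B a b\<close>, hence is zero.\<close>

lemma bordered_det_plucker_nonzero:
  fixes B :: "nat \<Rightarrow> nat \<Rightarrow> 'a::idom"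
  assumes n: "2 \<le> n" and nz: "bordered_det n B a b \<noteq> 0"
  shows "bordered_det n B a b * bordered_det n B c d - bordered_det n B a c * bordered_det n B b d
       + bordered_det n B a d * bordered_det n B b c = 0"
proof -
  let ?D = "bordered_det n B" and ?M = "bordered_mat n B a b"
  define cof where "cof x i = cofactor (bordered_mat n B x (\<lambda>_. 0)) i (n - 1)" for x i
  define g where "g i = ?D a b * cof c i - ?D a c * cof b i + ?D b c * cof a i" for i
  have linear: "?D a b * ?D c v - ?D a c * ?D b v + ?D a v * ?D b c = (\<Sum>i<n. v i * g i)" for v
  proof -
    have "?D a b * ?D c v - ?D a c * ?D b v + ?D a v * ?D b c
        = (\<Sum>i<n. ?D a b * (v i * cof c i)) - (\<Sum>i<n. ?D a c * (v i * cof b i))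
          + (\<Sum>i<n. v i * cof a i * ?D b c)"
      unfolding bordered_det_linear[OF n, of B _ v] cof_def
      by (simp only: sum_distrib_left sum_distrib_right)
    also have "\<dots> = (\<Sum>i<n. v i * g i)"
      unfolding sum_subtractf[symmetric] sum.distrib[symmetric]
      by (rule sum.cong[OF refl]) (simp add: g_def algebra_simps)
    finally show ?thesis .
  qed
  have swap: "?D x y = - ?D y x" for x y by (rule bordered_det_swap[OF n])
  have column: "(\<Sum>i<n. ?M $$ (i,k) * g i) = 0" if k: "k < n" for k
  proof -
    define v where "v = (if k = 0 then a else if k = n - 1 then b else B k)"
    have "(\<Sum>i<n. ?M $$ (i,k) * g i) = ?D a b * ?D c v - ?D a c * ?D b v + ?D a v * ?D b c"
      unfolding linear by (rule sum.cong) (use k in \<open>auto simp: bordered_mat_def v_def\<close>)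
    also have "\<dots> = 0"
      using swap[of c a] swap[of b a] swap[of c b] bordered_det_same[OF n]
        bordered_det_inner_column[OF n, where k = k and B = B] k
      by (auto simp: v_def algebra_simps)
    finally show ?thesis .
  qed
  have "g i = 0" if "i < n" for i
    using bordered_mat_carrier nz[unfolded bordered_det_def] column that
    by (rule det_nonzero_rows_independent)
  then show ?thesis by (simp add: linear)
qed

lemma bordered_det_plucker:
  fixes B :: "nat \<Rightarrow> nat \<Rightarrow> 'a::idom"
  assumes n: "2 \<le> n"
  shows "bordered_det n B a b * bordered_det n B c d - bordered_det n B a c * bordered_det n B b d
       + bordered_det n B a d * bordered_det n B b c = 0"
proof -
  let ?D = "bordered_det n B"
  have swap: "?D x y = - ?D y x" for x y by (rule bordered_det_swap[OF n])
  consider "?D a b \<noteq> 0" | "?D a c \<noteq> 0" | "?D a d \<noteq> 0" | "?D a b = 0" "?D a c = 0" "?D a d = 0"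
    by blast
  then show ?thesis
  proof cases
    case 1
    then show ?thesis by (rule bordered_det_plucker_nonzero[OF n])
  next
    case 2
    then have "?D a c * ?D b d - ?D a b * ?D c d + ?D a d * ?D c b = 0"
      by (rule bordered_det_plucker_nonzero[OF n])
    then show ?thesis using swap[of c b] by (simp add: algebra_simps)
  next
    case 3
    then have "?D a d * ?D b c - ?D a b * ?D d c + ?D a c * ?D d b = 0"
      by (rule bordered_det_plucker_nonzero[OF n])
    then show ?thesis using swap[of d c] swap[of d b] by (simp add: algebra_simps)
  next
    case 4
    then show ?thesis by simp
  qed
qed

section \<open>Staircase determinants of power series\<close>

definition coeff_int :: "'a::zero fps \<Rightarrow> int \<Rightarrow> 'a" where
  "coeff_int F k = (if k < 0 then 0 else fps_nth F (nat k))"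

definition lin_fps :: "'a::comm_ring_1 \<Rightarrow> 'a fps" where
  "lin_fps c = 1 - fps_const c * fps_X"

text \<open>The Jacobi-Trudi determinant of the staircase partition \<open>(n, n - 1, \<dots>, 1)\<close> with \<open>h\<^sub>k\<close>
  replaced by the \<open>k\<close>-th coefficient of \<open>F\<close> (rows and columns numbered from 0).\<close>

definition stair_det :: "'a::comm_ring_1 fps \<Rightarrow> nat \<Rightarrow> 'a" where
  "stair_det F n = det (mat n n (\<lambda>(i,j). coeff_int F (int n - 2 * int i + int j)))"

lemma coeff_int_neg [simp]: "k < 0 \<Longrightarrow> coeff_int F k = 0"
  by (simp add: coeff_int_def)

lemma coeff_int_0 [simp]: "coeff_int F 0 = fps_nth F 0"
  by (simp add: coeff_int_def)

lemma lin_fps_nth [simp]: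
  "fps_nth (lin_fps c) n = (if n = 0 then 1 else if n = 1 then - c else 0)"
  by (simp add: lin_fps_def fps_X_nth)

lemma lin_fps_mult_nth:
  "fps_nth (lin_fps c * F) n = fps_nth F n - c * (if n = 0 then 0 else fps_nth F (n - 1))"
  unfolding lin_fps_def left_diff_distrib mult.assoc by simp

lemma coeff_int_lin_fps_mult [simp]:
  "coeff_int (lin_fps c * F) k = coeff_int F k - c * coeff_int F (k - 1)"
proof -
  consider "k < 0" | "k = 0" | "0 < k" by linarith
  then show ?thesis
  proof cases
    case 3
    then have "nat (k - 1) = nat k - 1" "nat k \<noteq> 0" by auto
    with 3 show ?thesis by (simp add: coeff_int_def lin_fps_mult_nth)
  qed (simp_all add: coeff_int_def lin_fps_mult_nth)
qed

lemma coeff_int_quad_mult: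
  fixes F :: "'a::comm_ring_1 fps"
  shows "coeff_int ((1 - fps_const c * fps_X^2) * F) k = coeff_int F k - c * coeff_int F (k - 2)"
proof -
  have "(1 - fps_const c * fps_X^2) * F = F - fps_const c * (fps_X^2 * F)"
    by (simp add: algebra_simps)
  then have nth: "fps_nth ((1 - fps_const c * fps_X^2) * F) n
      = fps_nth F n - c * (if n < 2 then 0 else fps_nth F (n - 2))" for n
    by (simp add: fps_X_power_mult_nth)
  consider "k < 2" | "2 \<le> k" by linarith
  then show ?thesis
  proof cases
    case 1
    then show ?thesis by (cases "k < 0") (auto simp: coeff_int_def nth)
  next
    case 2
    then have "nat (k - 2) = nat k - 2" "\<not> nat k < 2" by auto
    with 2 show ?thesis by (simp add: coeff_int_def nth)
  qed
qed

lemma coeff_int_compose_linear: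
  fixes F :: "'a::comm_ring_1 fps"
  shows "coeff_int (F oo (fps_const q * fps_X)) k = q ^ nat k * coeff_int F k"
  by (simp add: coeff_int_def fps_compose_linear)

lemma lin_fps_compose_linear:
  "lin_fps c oo (fps_const q * fps_X) = lin_fps (q * c)"
  by (rule fps_ext) (simp add: fps_compose_linear)

lemma lin_fps_uminus_mult: "lin_fps (- c) * lin_fps c = 1 - fps_const (c^2) * fps_X^2"
proof -
  have "lin_fps (- c) * lin_fps c = 1 - (fps_const c * fps_X)^2"
    unfolding lin_fps_def fps_const_neg[symmetric] power2_eq_square
    by (simp add: algebra_simps del: fps_const_neg fps_const_mult)
  then show ?thesis by (simp add: power_mult_distrib fps_const_power)
qed

lemma stair_det_0 [simp]: "stair_det F 0 = 1"
  by (simp add: stair_det_def)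

lemma stair_det_Suc_shifted:
  assumes F0: "fps_nth F 0 = 1" and N: "N = Suc m"
  shows "det (mat N N (\<lambda>(i,j). coeff_int F (int N - 2 * int i + int j - 1))) = stair_det F m"
proof -
  let ?A = "mat N N (\<lambda>(i,j). coeff_int F (int N - 2 * int i + int j - 1))"
  have "det ?A = ?A $$ (m,m) * cofactor ?A m m"
    by (rule det_single_nonzero_in_row) (use N in auto)
  also have "?A $$ (m,m) = 1" using F0 N by simp
  also have "cofactor ?A m m = stair_det F m"
    unfolding cofactor_def N mat_delete_mat stair_det_def
    by (simp, intro arg_cong[where f=det] eq_matI) (auto simp: algebra_simps)
  finally show ?thesis by simp
qed

text \<open>Row \<open>i + 1\<close> of the staircase matrix is row \<open>i\<close> shifted by two places, so multiplying \<open>F\<close>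
  by \<open>1 - c X\<^sup>2\<close> amounts to a unitriangular row operation.\<close>

lemma stair_det_quad_mult:
  "stair_det ((1 - fps_const c * fps_X^2) * F) n = stair_det F n"
proof -
  define A where "A = mat n n (\<lambda>(i,j). coeff_int F (int n - 2 * int i + int j))"
  define L where "L = mat n n (\<lambda>(i,j). if i = j then 1 else if Suc i = j then -c else 0)"
  have A: "A \<in> carrier_mat n n" and L: "L \<in> carrier_mat n n" unfolding A_def L_def by auto
  have "det L = 1"
    using det_upper_triangular[of L n] L by (simp add: upper_triangular_def prod_list_diag_prod L_def)
  moreover have "L * A = mat n n (\<lambda>(i,j). coeff_int ((1 - fps_const c * fps_X^2) * F) (int n - 2 * int i + int j))"
  proof (rule eq_matI)
    fix i j assume "i < dim_row (mat n n (\<lambda>(i,j). coeff_int ((1 - fps_const c * fps_X^2) * F) (int n - 2 * int i + int j)))"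
      "j < dim_col (mat n n (\<lambda>(i,j). coeff_int ((1 - fps_const c * fps_X^2) * F) (int n - 2 * int i + int j)))"
    hence i: "i < n" and j: "j < n" by auto
    have "(L * A) $$ (i,j) = (\<Sum>k<n. L $$ (i,k) * A $$ (k,j))"
      using A L i j by (simp add: scalar_prod_def lessThan_atLeast0)
    also have "\<dots> = (\<Sum>k<n. (if k = i then A $$ (i,j) else 0) + (if k = Suc i then - c * A $$ (k,j) else 0))"
      by (rule sum.cong) (auto simp: L_def i)
    also have "\<dots> = A $$ (i,j) + (if Suc i < n then - c * A $$ (Suc i,j) else 0)"
      unfolding sum.distrib using i by (simp add: sum.delta)
    also have "\<dots> = coeff_int ((1 - fps_const c * fps_X^2) * F) (int n - 2 * int i + int j)"
    proof (cases "Suc i < n")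
      case True
      then show ?thesis
        unfolding coeff_int_quad_mult using j by (simp add: A_def algebra_simps)
    next
      case False
      then have "int n - 2 * int i + int j - 2 < 0" using i j by simp
      then show ?thesis unfolding coeff_int_quad_mult using i j False by (simp add: A_def)
    qed
    finally show "(L * A) $$ (i,j) = mat n n (\<lambda>(i,j). coeff_int ((1 - fps_const c * fps_X^2) * F) (int n - 2 * int i + int j)) $$ (i,j)"
      using i j by simp
  qed (auto simp: A_def L_def)
  ultimately show ?thesis using det_mult[OF L A] unfolding stair_det_def A_def by simp
qed

lemma stair_det_compose_linear:
  fixes F :: "'a::idom fps"
  assumes q: "q \<noteq> 0"
  shows "stair_det (F oo (fps_const q * fps_X)) n = q ^ (n * (n + 1) div 2) * stair_det F n"
proof -
  let ?G = "F oo (fps_const q * fps_X)"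
  define S where "S = (\<Sum>i<n. i)"
  have "2 * S = n * (n - 1)" unfolding S_def by (induct n) (auto simp: algebra_simps)
  moreover have "n * (n + 1) = n * (n - 1) + 2 * n" "n * n = n * (n - 1) + n"
    by (cases n; simp add: algebra_simps)+
  ultimately have exponent: "n * n + S = 2 * S + n * (n + 1) div 2" by simp
  have "mat n n (\<lambda>(i,j). q ^ (2 * i) * 1 * coeff_int ?G (int n - 2 * int i + int j))
      = mat n n (\<lambda>(i,j). 1 * q ^ (n + j) * coeff_int F (int n - 2 * int i + int j))"
  proof (rule eq_matI)
    fix i j
    show "mat n n (\<lambda>(i,j). q ^ (2 * i) * 1 * coeff_int ?G (int n - 2 * int i + int j)) $$ (i,j)
        = mat n n (\<lambda>(i,j). 1 * q ^ (n + j) * coeff_int F (int n - 2 * int i + int j)) $$ (i,j)"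
      if "i < dim_row (mat n n (\<lambda>(i,j). 1 * q ^ (n + j) * coeff_int F (int n - 2 * int i + int j)))"
        "j < dim_col (mat n n (\<lambda>(i,j). 1 * q ^ (n + j) * coeff_int F (int n - 2 * int i + int j)))"
    proof (cases "int n - 2 * int i + int j < 0")
      case False
      then have "n + j = 2 * i + nat (int n - 2 * int i + int j)" by simp
      then have "q ^ (n + j) = q ^ (2 * i) * q ^ nat (int n - 2 * int i + int j)"
        by (simp only: power_add)
      then have "q ^ (2 * i) * 1 * coeff_int ?G (int n - 2 * int i + int j)
          = 1 * q ^ (n + j) * coeff_int F (int n - 2 * int i + int j)"
        unfolding coeff_int_compose_linear by (simp add: mult_ac)
      with that show ?thesis by simp
    qed (use that in simp)
  qed auto
  then have "(\<Prod>i<n. q ^ (2 * i)) * stair_det ?G n = (\<Prod>j<n. q ^ (n + j)) * stair_det F n"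
    using det_mat_scale_rows_cols[of n "\<lambda>i. q ^ (2 * i)" "\<lambda>_. 1" "\<lambda>(i,j). coeff_int ?G (int n - 2 * int i + int j)"]
      det_mat_scale_rows_cols[of n "\<lambda>_. 1" "\<lambda>j. q ^ (n + j)" "\<lambda>(i,j). coeff_int F (int n - 2 * int i + int j)"]
    unfolding stair_det_def by simp
  moreover have "(\<Prod>i<n. q ^ (2 * i)) = q ^ (2 * S)" "(\<Prod>j<n. q ^ (n + j)) = q ^ (n * n + S)"
    unfolding S_def power_sum[symmetric] by (simp_all add: sum_distrib_left sum.distrib)
  ultimately show ?thesis using q unfolding exponent power_add by simp
qed

lemma isCont_stair_det:
  fixes G :: "'b::t2_space \<Rightarrow> 'a::real_normed_field fps"
  assumes "\<And>k. isCont (\<lambda>t. coeff_int (G t) k) x"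
  shows "isCont (\<lambda>t. stair_det (G t) n) x"
proof -
  have "stair_det (G t) n = (\<Sum>p\<in>{p. p permutes {0..<n}}.
          signof p * (\<Prod>i=0..<n. coeff_int (G t) (int n - 2 * int i + int (p i))))" for t
    unfolding stair_det_def det_def by (auto intro!: sum.cong prod.cong simp: permutes_in_image)
  then show ?thesis by (simp only:) (intro continuous_intros assms)
qed

section \<open>Three-term identities for staircase determinants\<close>

text \<open>The columns \<open>ext_col F a b N m\<close>, \<open>m = -2, \<dots>, N - 1\<close>, form a square matrix whose middle \<open>N\<close> rows
  are a staircase matrix of \<open>F\<close> and whose first and last rows are geometric in \<open>a\<close> and \<open>b\<close>.
  Replacing its outer columns by unit vectors or keeping them yields the six staircase
  determinants of \<open>stair_det_three_term\<close>, which is therefore an instance of the three-term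
  Pluecker relation.\<close>

definition ext_col :: "'a::comm_ring_1 fps \<Rightarrow> 'a \<Rightarrow> 'a \<Rightarrow> nat \<Rightarrow> int \<Rightarrow> nat \<Rightarrow> 'a" where
  "ext_col F a b N m i =
     (if i = 0 then a ^ nat (m + 2) else if i = Suc N then b ^ nat (m + 2)
      else coeff_int F (int N - 2 * int (i - 1) + m))"

definition unit_col :: "nat \<Rightarrow> nat \<Rightarrow> 'a::zero_neq_one" where
  "unit_col k i = (if i = k then 1 else 0)"

abbreviation ext_det :: "'a::comm_ring_1 fps \<Rightarrow> 'a \<Rightarrow> 'a \<Rightarrow> nat \<Rightarrow> (nat \<Rightarrow> 'a) \<Rightarrow> (nat \<Rightarrow> 'a) \<Rightarrow> 'a"
  where "ext_det F a b N \<equiv> bordered_det (Suc (Suc N)) (\<lambda>j. ext_col F a b N (int j - 2))"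

lemma ext_det_top_bottom:
  assumes F0: "fps_nth F 0 = 1" and N: "N = Suc m"
  shows "ext_det F a b N (unit_col 0) (unit_col (Suc N)) = stair_det F m"
proof -
  define E where "E = (\<lambda>(i,j). if j = 0 then unit_col 0 i else if j = Suc (Suc N) - 1 then unit_col (Suc N) i
    else ext_col F a b N (int j - 2) i)"
  define E2 where "E2 = (\<lambda>(i,j). E (if i < 0 then i else Suc i, if j < 0 then j else Suc j))"
  have b: "ext_det F a b N (unit_col 0) (unit_col (Suc N)) = det (mat (Suc (Suc N)) (Suc (Suc N)) E)"
    unfolding bordered_det_def bordered_mat_def E_def ..
  have c1: "det (mat (Suc (Suc N)) (Suc (Suc N)) E) = E (0,0) * (-1)^(0+0) * det (mat (Suc N) (Suc N) E2)"
    unfolding E2_def by (rule det_mat_single_nonzero_in_column) (auto simp: E_def unit_col_def)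
  have c2: "det (mat (Suc N) (Suc N) E2) =
     E2 (N,N) * (-1)^(N+N) * det (mat N N (\<lambda>(i,j). E2 (if i < N then i else Suc i, if j < N then j else Suc j)))"
    by (rule det_mat_single_nonzero_in_column) (auto simp: E2_def E_def unit_col_def)
  have c3: "mat N N (\<lambda>(i,j). E2 (if i < N then i else Suc i, if j < N then j else Suc j))
      = mat N N (\<lambda>(i,j). coeff_int F (int N - 2 * int i + int j - 1))"
    by (rule eq_matI) (auto simp: E2_def E_def ext_col_def algebra_simps)
  have e: "E (0,0) = 1" "E2 (N,N) = 1" by (auto simp: E2_def E_def unit_col_def)
  show ?thesis unfolding b c1 c2 c3 e stair_det_Suc_shifted[OF F0 N] by simp
qed

lemma ext_det_top_last:
  "ext_det F a b N (unit_col 0) (ext_col F a b N (int N - 1)) = (-1)^N * b * stair_det (lin_fps b * F) N"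
proof -
  define E where "E = (\<lambda>(i,j). if j = 0 then unit_col 0 i else if j = Suc (Suc N) - 1
    then ext_col F a b N (int N - 1) i else ext_col F a b N (int j - 2) i)"
  define f where "f = (\<lambda>i j. coeff_int F (int N - 2 * int i + int j - 1))"
  have b: "ext_det F a b N (unit_col 0) (ext_col F a b N (int N - 1)) = det (mat (Suc (Suc N)) (Suc (Suc N)) E)"
    unfolding bordered_det_def bordered_mat_def E_def ..
  have c1: "det (mat (Suc (Suc N)) (Suc (Suc N)) E) = E (0,0) * (-1)^(0+0) *
      det (mat (Suc N) (Suc N) (\<lambda>(i,j). E (if i < 0 then i else Suc i, if j < 0 then j else Suc j)))"
    by (rule det_mat_single_nonzero_in_column) (auto simp: E_def unit_col_def)
  have c2: "mat (Suc N) (Suc N) (\<lambda>(i,j). E (if i < 0 then i else Suc i, if j < 0 then j else Suc j))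
      = mat (Suc N) (Suc N) (\<lambda>(i,j). if i = N then 1 * b ^ (1 + j) else f i j)"
    by (rule eq_matI) (auto simp: E_def f_def ext_col_def algebra_simps nat_add_distrib)
  have c3: "mat N N (\<lambda>(i,j). f i (Suc j) - b * f i j)
      = mat N N (\<lambda>(i,j). coeff_int (lin_fps b * F) (int N - 2 * int i + int j))"
    unfolding coeff_int_lin_fps_mult by (rule eq_matI) (auto simp: f_def algebra_simps)
  have e: "E (0,0) = 1" by (auto simp: E_def unit_col_def)
  show ?thesis unfolding b c1 c2 det_geometric_last_row[where f = f] c3 e stair_det_def by simp
qed

lemma ext_det_first_bottom:
  assumes F0: "fps_nth F 0 = 1" and N: "N = Suc m"
  shows "ext_det F a b N (ext_col F a b N (-2)) (unit_col (Suc N)) = stair_det (lin_fps a * F) m"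
proof -
  define E where "E = (\<lambda>(i,j). if j = 0 then ext_col F a b N (-2) i else if j = Suc (Suc N) - 1
    then unit_col (Suc N) i else ext_col F a b N (int j - 2) i)"
  define f where "f = (\<lambda>i j. coeff_int F (int N - 2 * int i + int j - 2))"
  have b: "ext_det F a b N (ext_col F a b N (-2)) (unit_col (Suc N)) = det (mat (Suc (Suc N)) (Suc (Suc N)) E)"
    unfolding bordered_det_def bordered_mat_def E_def ..
  have c1: "det (mat (Suc (Suc N)) (Suc (Suc N)) E) = E (Suc N, Suc N) * (-1)^(Suc N + Suc N) *
      det (mat (Suc N) (Suc N) (\<lambda>(i,j). E (if i < Suc N then i else Suc i, if j < Suc N then j else Suc j)))"
    by (rule det_mat_single_nonzero_in_column) (auto simp: E_def unit_col_def)
  have c2: "mat (Suc N) (Suc N) (\<lambda>(i,j). E (if i < Suc N then i else Suc i, if j < Suc N then j else Suc j))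
     = mat (Suc N) (Suc N) (\<lambda>(i,j). if i = 0 then 1 * a ^ (0 + j) else f (i - 1) j)"
    by (rule eq_matI) (auto simp: E_def f_def ext_col_def algebra_simps nat_add_distrib)
  have c3: "mat N N (\<lambda>(i,j). f i (Suc j) - a * f i j)
      = mat N N (\<lambda>(i,j). coeff_int (lin_fps a * F) (int N - 2 * int i + int j - 1))"
    unfolding coeff_int_lin_fps_mult by (rule eq_matI) (auto simp: f_def algebra_simps)
  have e: "E (Suc N, Suc N) = 1" by (auto simp: E_def unit_col_def)
  have F0': "fps_nth (lin_fps a * F) 0 = 1" using F0 by simp
  show ?thesis
    unfolding b c1 c2 det_geometric_first_row[where f = f] c3 e stair_det_Suc_shifted[OF F0' N]
    by simp
qed

lemma ext_det_first_top:
  assumes F0: "fps_nth F 0 = 1" and N: "N = Suc m"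
  shows "ext_det F a b N (ext_col F a b N (-2)) (unit_col 0) = - stair_det (lin_fps b * F) m"
proof -
  define E where "E = (\<lambda>(i,j). if j = 0 then ext_col F a b N (-2) i else if j = Suc (Suc N) - 1
    then unit_col 0 i else ext_col F a b N (int j - 2) i)"
  define f where "f = (\<lambda>i j. coeff_int F (int N - 2 * int i + int j - 2))"
  have b: "ext_det F a b N (ext_col F a b N (-2)) (unit_col 0) = det (mat (Suc (Suc N)) (Suc (Suc N)) E)"
    unfolding bordered_det_def bordered_mat_def E_def ..
  have c1: "det (mat (Suc (Suc N)) (Suc (Suc N)) E) = E (0, Suc N) * (-1)^(0 + Suc N) *
      det (mat (Suc N) (Suc N) (\<lambda>(i,j). E (if i < 0 then i else Suc i, if j < Suc N then j else Suc j)))"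
    by (rule det_mat_single_nonzero_in_column) (auto simp: E_def unit_col_def)
  have c2: "mat (Suc N) (Suc N) (\<lambda>(i,j). E (if i < 0 then i else Suc i, if j < Suc N then j else Suc j))
     = mat (Suc N) (Suc N) (\<lambda>(i,j). if i = N then 1 * b ^ (0 + j) else f i j)"
    by (rule eq_matI) (auto simp: E_def f_def ext_col_def algebra_simps nat_add_distrib)
  have c3: "mat N N (\<lambda>(i,j). f i (Suc j) - b * f i j)
      = mat N N (\<lambda>(i,j). coeff_int (lin_fps b * F) (int N - 2 * int i + int j - 1))"
    unfolding coeff_int_lin_fps_mult by (rule eq_matI) (auto simp: f_def algebra_simps)
  have e: "E (0, Suc N) = 1" by (auto simp: E_def unit_col_def)
  have F0': "fps_nth (lin_fps b * F) 0 = 1" using F0 by simp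
  show ?thesis
    unfolding b c1 c2 det_geometric_last_row[where f = f] c3 e stair_det_Suc_shifted[OF F0' N]
    by simp
qed

lemma ext_det_bottom_last:
  "ext_det F a b N (unit_col (Suc N)) (ext_col F a b N (int N - 1))
     = (-1)^(Suc N) * a * stair_det (lin_fps a * F) N"
proof -
  define E where "E = (\<lambda>(i,j). if j = 0 then unit_col (Suc N) i else if j = Suc (Suc N) - 1
    then ext_col F a b N (int N - 1) i else ext_col F a b N (int j - 2) i)"
  define f where "f = (\<lambda>i j. coeff_int F (int N - 2 * int i + int j - 1))"
  have b: "ext_det F a b N (unit_col (Suc N)) (ext_col F a b N (int N - 1)) = det (mat (Suc (Suc N)) (Suc (Suc N)) E)"
    unfolding bordered_det_def bordered_mat_def E_def ..
  have c1: "det (mat (Suc (Suc N)) (Suc (Suc N)) E) = E (Suc N, 0) * (-1)^(Suc N + 0) *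
      det (mat (Suc N) (Suc N) (\<lambda>(i,j). E (if i < Suc N then i else Suc i, if j < 0 then j else Suc j)))"
    by (rule det_mat_single_nonzero_in_column) (auto simp: E_def unit_col_def)
  have c2: "mat (Suc N) (Suc N) (\<lambda>(i,j). E (if i < Suc N then i else Suc i, if j < 0 then j else Suc j))
     = mat (Suc N) (Suc N) (\<lambda>(i,j). if i = 0 then 1 * a ^ (1 + j) else f (i - 1) j)"
    by (rule eq_matI) (auto simp: E_def f_def ext_col_def algebra_simps nat_add_distrib)
  have c3: "mat N N (\<lambda>(i,j). f i (Suc j) - a * f i j)
      = mat N N (\<lambda>(i,j). coeff_int (lin_fps a * F) (int N - 2 * int i + int j))"
    unfolding coeff_int_lin_fps_mult by (rule eq_matI) (auto simp: f_def algebra_simps)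
  have e: "E (Suc N, 0) = 1" by (auto simp: E_def unit_col_def)
  show ?thesis unfolding b c1 c2 det_geometric_first_row[where f = f] c3 e stair_det_def by simp
qed

lemma ext_det_first_last:
  "ext_det F a b N (ext_col F a b N (-2)) (ext_col F a b N (int N - 1))
     = (-1)^N * (b - a) * stair_det (lin_fps b * (lin_fps a * F)) N"
proof -
  define f where "f = (\<lambda>i j. if i = N then b ^ (0 + j) else coeff_int F (int N - 2 * int i + int j - 2))"
  define g where "g = (\<lambda>i j. coeff_int (lin_fps a * F) (int N - 2 * int i + int j - 1))"
  have 1: "bordered_mat (Suc (Suc N)) (\<lambda>j. ext_col F a b N (int j - 2)) (ext_col F a b N (-2)) (ext_col F a b N (int N - 1))
     = mat (Suc (Suc N)) (Suc (Suc N)) (\<lambda>(i,j). if i = 0 then 1 * a ^ (0 + j) else f (i - 1) j)"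
  proof (rule eq_matI)
    fix i j assume "i < dim_row (mat (Suc (Suc N)) (Suc (Suc N)) (\<lambda>(i,j). if i = 0 then 1 * a ^ (0 + j) else f (i - 1) j))"
      "j < dim_col (mat (Suc (Suc N)) (Suc (Suc N)) (\<lambda>(i,j). if i = 0 then 1 * a ^ (0 + j) else f (i - 1) j))"
    hence i: "i < Suc (Suc N)" and j: "j < Suc (Suc N)" by auto
    show "bordered_mat (Suc (Suc N)) (\<lambda>j. ext_col F a b N (int j - 2)) (ext_col F a b N (-2)) (ext_col F a b N (int N - 1)) $$ (i, j) =
         mat (Suc (Suc N)) (Suc (Suc N)) (\<lambda>(i,j). if i = 0 then 1 * a ^ (0 + j) else f (i - 1) j) $$ (i, j)"
      using i j unfolding bordered_mat_def ext_col_def f_def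
      by (cases "j = Suc N"; cases "j = 0"; cases "i = 0"; cases "i = Suc N")
         (auto simp: algebra_simps nat_add_distrib)
  qed (auto simp: bordered_mat_def)
  have 2: "mat (Suc N) (Suc N) (\<lambda>(i,j). f i (Suc j) - a * f i j)
     = mat (Suc N) (Suc N) (\<lambda>(i,j). if i = N then (b - a) * b ^ (0 + j) else g i j)"
    unfolding g_def coeff_int_lin_fps_mult by (rule eq_matI) (auto simp: f_def algebra_simps)
  have 3: "mat N N (\<lambda>(i,j). g i (Suc j) - b * g i j)
     = mat N N (\<lambda>(i,j). coeff_int (lin_fps b * (lin_fps a * F)) (int N - 2 * int i + int j))"
    unfolding g_def coeff_int_lin_fps_mult by (rule eq_matI) (auto simp: algebra_simps)
  show ?thesis
    unfolding bordered_det_def 1 det_geometric_first_row[where f = f] 2 det_geometric_last_row[where f = g] 3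
      stair_det_def
    by simp
qed

lemma stair_det_three_term:
  fixes F :: "'a::idom fps"
  assumes F0: "fps_nth F 0 = 1"
  shows "b * stair_det (lin_fps b * F) (Suc m) * stair_det (lin_fps a * F) m
       - a * stair_det (lin_fps b * F) m * stair_det (lin_fps a * F) (Suc m)
       = (b - a) * stair_det F m * stair_det (lin_fps b * (lin_fps a * F)) (Suc m)"
proof -
  let ?N = "Suc m"
  let ?D = "ext_det F a b ?N" and ?first = "ext_col F a b ?N (-2)" and ?last = "ext_col F a b ?N (int ?N - 1)"
  have n: "2 \<le> Suc (Suc ?N)" by simp
  have "?D (unit_col 0) ?last * ?D ?first (unit_col (Suc ?N))
      - ?D (unit_col 0) ?first * ?D ?last (unit_col (Suc ?N))
      + ?D (unit_col 0) (unit_col (Suc ?N)) * ?D ?last ?first = 0"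
    by (rule bordered_det_plucker[OF n])
  then have "?D (unit_col 0) ?last * ?D ?first (unit_col (Suc ?N))
      - (- ?D ?first (unit_col 0)) * (- ?D (unit_col (Suc ?N)) ?last)
      + ?D (unit_col 0) (unit_col (Suc ?N)) * (- ?D ?first ?last) = 0"
    using bordered_det_swap[OF n, of _ "unit_col 0" ?first] bordered_det_swap[OF n, of _ ?last "unit_col (Suc ?N)"]
      bordered_det_swap[OF n, of _ ?last ?first]
    by simp
  then have "(-1)^?N * (b * stair_det (lin_fps b * F) ?N * stair_det (lin_fps a * F) m
       - a * stair_det (lin_fps b * F) m * stair_det (lin_fps a * F) ?N
       - (b - a) * stair_det F m * stair_det (lin_fps b * (lin_fps a * F)) ?N) = 0"
    unfolding ext_det_top_bottom[OF F0 refl] ext_det_top_last ext_det_first_bottom[OF F0 refl]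
      ext_det_first_top[OF F0 refl] ext_det_bottom_last ext_det_first_last
    by (simp add: algebra_simps)
  then show ?thesis by simp
qed

text \<open>Apply \<open>stair_det_three_term\<close> to \<open>(1 - a X) (1 - b X) F\<close> with parameters \<open>-a, -b\<close>: the factors
  \<open>(1 + c X) (1 - c X) = 1 - c\<^sup>2 X\<^sup>2\<close> do not change staircase determinants.\<close>

lemma stair_det_three_term_dual:
  fixes F :: "'a::idom fps"
  assumes F0: "fps_nth F 0 = 1"
  shows "b * stair_det (lin_fps b * F) m * stair_det (lin_fps a * F) (Suc m)
       - a * stair_det (lin_fps a * F) m * stair_det (lin_fps b * F) (Suc m)
       = (b - a) * stair_det (lin_fps b * (lin_fps a * F)) m * stair_det F (Suc m)"
proof -
  define W where "W = lin_fps b * (lin_fps a * F)"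
  have W0: "fps_nth W 0 = 1" using F0 by (simp add: W_def)
  have Wb: "lin_fps (- b) * W = (1 - fps_const (b^2) * fps_X^2) * (lin_fps a * F)"
    unfolding W_def by (simp only: mult.assoc[symmetric] lin_fps_uminus_mult)
  have Wa: "lin_fps (- a) * W = (1 - fps_const (a^2) * fps_X^2) * (lin_fps b * F)"
    unfolding W_def mult.left_commute[of "lin_fps b"] by (simp only: mult.assoc[symmetric] lin_fps_uminus_mult)
  have Wab: "lin_fps (- b) * ((1 - fps_const (a^2) * fps_X^2) * (lin_fps b * F))
      = (1 - fps_const (b^2) * fps_X^2) * ((1 - fps_const (a^2) * fps_X^2) * F)"
    unfolding mult.left_commute[of "1 - fps_const (a^2) * fps_X^2"]
    by (simp only: mult.assoc[symmetric] lin_fps_uminus_mult)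
  from stair_det_three_term[OF W0, of "- b" m "- a"]
  show ?thesis unfolding Wa Wb Wab stair_det_quad_mult W_def[symmetric] by (simp add: algebra_simps)
qed

lemma stair_det_three_term_sum_of_ne:
  fixes F :: "'a::idom fps"
  assumes F0: "fps_nth F 0 = 1" and ne: "a \<noteq> b"
  shows "b * stair_det (lin_fps b * (lin_fps a * F)) m * stair_det F (Suc m)
       + a * stair_det F m * stair_det (lin_fps b * (lin_fps a * F)) (Suc m)
       = (a + b) * stair_det (lin_fps b * F) m * stair_det (lin_fps a * F) (Suc m)"
proof -
  let ?N = "Suc m"
  let ?Xm = "stair_det (lin_fps b * (lin_fps a * F)) m" and ?XN = "stair_det F ?N"
  let ?Ym = "stair_det F m" and ?YN = "stair_det (lin_fps b * (lin_fps a * F)) ?N"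
  let ?Am = "stair_det (lin_fps a * F) m" and ?BN = "stair_det (lin_fps b * F) ?N"
  let ?Bm = "stair_det (lin_fps b * F) m" and ?AN = "stair_det (lin_fps a * F) ?N"
  have D: "b * ?BN * ?Am - a * ?Bm * ?AN = (b - a) * ?Ym * ?YN"
    by (rule stair_det_three_term[OF F0])
  have D': "b * ?Bm * ?AN - a * ?Am * ?BN = (b - a) * ?Xm * ?XN"
    by (rule stair_det_three_term_dual[OF F0])
  have "(b - a) * (b * ?Xm * ?XN + a * ?Ym * ?YN - (a + b) * ?Bm * ?AN)
      = b * ((b - a) * ?Xm * ?XN) + a * ((b - a) * ?Ym * ?YN) - (a + b) * (b - a) * ?Bm * ?AN"
    by (simp add: algebra_simps)
  also have "\<dots> = 0" unfolding D[symmetric] D'[symmetric] by (simp add: algebra_simps)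
  finally show ?thesis using ne by simp
qed

text \<open>The case \<open>a = b\<close> follows by continuity in \<open>a\<close>.\<close>

lemma stair_det_three_term_sum:
  fixes F :: "'a::real_normed_field fps"
  assumes F0: "fps_nth F 0 = 1"
  shows "b * stair_det (lin_fps b * (lin_fps a * F)) m * stair_det F (Suc m)
       + a * stair_det F m * stair_det (lin_fps b * (lin_fps a * F)) (Suc m)
       = (a + b) * stair_det (lin_fps b * F) m * stair_det (lin_fps a * F) (Suc m)"
proof (cases "a = b")
  case False
  then show ?thesis by (rule stair_det_three_term_sum_of_ne[OF F0])
next
  case True
  define D where "D t = b * stair_det (lin_fps b * (lin_fps t * F)) m * stair_det F (Suc m)
       + t * stair_det F m * stair_det (lin_fps b * (lin_fps t * F)) (Suc m)
       - (t + b) * stair_det (lin_fps b * F) m * stair_det (lin_fps t * F) (Suc m)" for t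
  have "isCont (\<lambda>t. stair_det (lin_fps b * (lin_fps t * F)) k) b" "isCont (\<lambda>t. stair_det (lin_fps t * F) k) b"
    for k by (intro isCont_stair_det; simp)+
  then have "isCont D b" unfolding D_def by (intro continuous_intros)
  define s :: "nat \<Rightarrow> 'a" where "s n = b + of_real (inverse (real (Suc n)))" for n
  have "s \<longlonglongrightarrow> b"
    unfolding s_def using tendsto_add[OF tendsto_const tendsto_of_real[OF LIMSEQ_inverse_real_of_nat], of b]
    by simp
  with \<open>isCont D b\<close> have "(\<lambda>n. D (s n)) \<longlonglongrightarrow> D b" by (rule isCont_tendsto_compose)
  moreover have "D (s n) = 0" for n
  proof -
    have "of_real (inverse (real (Suc n))) \<noteq> (0::'a)" by (simp only: of_real_eq_0_iff) simp
    then have "s n \<noteq> b" unfolding s_def by (metis add_cancel_left_right)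
    then show ?thesis unfolding D_def using stair_det_three_term_sum_of_ne[OF F0, of "s n" b m] by simp
  qed
  ultimately have "D b = 0" using LIMSEQ_unique[OF _ tendsto_const] by simp
  then show ?thesis unfolding D_def True by simp
qed

section \<open>The series of the \<open>p\<^sub>n\<close>\<close>

text \<open>\<open>small_qexp q y\<close> and \<open>big_qexp q\<close> are the expansions of \<open>1 / ((1 - q) y t; q)\<^sub>\<infinity>\<close> and
  \<open>(-(1 - q) t; q)\<^sub>\<infinity>\<close>, so \<open>p_fps q y z\<close>, the series with coefficients \<open>p\<^sub>n(y, z)\<close>, is
  \<open>small_qexp q y * small_qexp q z * big_qexp q\<close>.\<close>

definition small_qexp :: "complex \<Rightarrow> complex \<Rightarrow> complex fps" where
  "small_qexp q y = Abs_fps (\<lambda>n. (1 - q) ^ n * y ^ n / qpoch q n)"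

definition big_qexp :: "complex \<Rightarrow> complex fps" where
  "big_qexp q = Abs_fps (\<lambda>n. (1 - q) ^ n * q ^ (n * (n - 1) div 2) / qpoch q n)"

definition p_fps :: "complex \<Rightarrow> complex \<Rightarrow> complex \<Rightarrow> complex fps" where
  "p_fps q y z = Abs_fps (\<lambda>n. pnat q n y z)"

lemma qpoch_Suc: "qpoch q (Suc m) = qpoch q m * (1 - q ^ Suc m)"
  unfolding qpoch_def by simp

lemma qpoch_nonzero:
  assumes "\<forall>n::nat. n > 0 \<longrightarrow> q ^ n \<noteq> 1"
  shows "qpoch q m \<noteq> 0"
  using assms by (auto simp: qpoch_def)

lemma p_fps_eq_qexp:
  assumes noroot: "\<forall>n::nat. n > 0 \<longrightarrow> q ^ n \<noteq> 1"
  shows "p_fps q y z = small_qexp q y * (small_qexp q z * big_qexp q)"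
proof (rule fps_ext)
  fix n
  have "pnat q n y z = (\<Sum>a\<le>n. \<Sum>b\<le>n - a. (1 - q) ^ n *
      (let c = n - a - b in y ^ a * z ^ b * q ^ (c * (c - 1) div 2) / (qpoch q a * qpoch q b * qpoch q c)))"
    by (simp only: pnat_def sum_distrib_left)
  also have "\<dots> = (\<Sum>a\<le>n. \<Sum>b\<le>n - a. fps_nth (small_qexp q y) a *
      (fps_nth (small_qexp q z) b * fps_nth (big_qexp q) (n - a - b)))"
  proof (intro sum.cong refl)
    fix a b assume a: "a \<in> {..n}" and b: "b \<in> {..n - a}"
    define c where "c = n - a - b"
    have "(1 - q) ^ n = (1 - q) ^ a * (1 - q) ^ b * (1 - q) ^ c"
      using a b unfolding c_def by (simp flip: power_add)
    moreover have "qpoch q a \<noteq> 0" "qpoch q b \<noteq> 0" "qpoch q c \<noteq> 0"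
      using qpoch_nonzero[OF noroot] by auto
    ultimately show "(1 - q) ^ n * (let c = n - a - b in y ^ a * z ^ b * q ^ (c * (c - 1) div 2)
          / (qpoch q a * qpoch q b * qpoch q c))
        = fps_nth (small_qexp q y) a * (fps_nth (small_qexp q z) b * fps_nth (big_qexp q) (n - a - b))"
      unfolding c_def[symmetric] Let_def small_qexp_def big_qexp_def by (simp add: field_simps)
  qed
  also have "\<dots> = fps_nth (small_qexp q y * (small_qexp q z * big_qexp q)) n"
    by (simp add: fps_mult_nth atLeast0AtMost sum_distrib_left)
  finally show "fps_nth (p_fps q y z) n = fps_nth (small_qexp q y * (small_qexp q z * big_qexp q)) n"
    by (simp add: p_fps_def)
qed

lemma small_qexp_q_mult:
  assumes noroot: "\<forall>n::nat. n > 0 \<longrightarrow> q ^ n \<noteq> 1"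
  shows "small_qexp q (q * y) = lin_fps ((1 - q) * y) * small_qexp q y"
proof (rule fps_ext)
  fix n
  show "fps_nth (small_qexp q (q * y)) n = fps_nth (lin_fps ((1 - q) * y) * small_qexp q y) n"
  proof (cases n)
    case (Suc m)
    have "qpoch q m \<noteq> 0" "qpoch q (Suc m) \<noteq> 0" using qpoch_nonzero[OF noroot] by auto
    then have "1 - q ^ Suc m \<noteq> 0" "qpoch q m \<noteq> 0" by (auto simp: qpoch_Suc)
    then show ?thesis
      unfolding Suc lin_fps_mult_nth by (simp add: small_qexp_def qpoch_Suc power_mult_distrib field_simps)
  qed (simp add: small_qexp_def lin_fps_mult_nth)
qed

lemma small_qexp_compose_linear:
  "small_qexp q y oo (fps_const q * fps_X) = small_qexp q (q * y)"
  by (rule fps_ext) (simp add: small_qexp_def fps_compose_linear power_mult_distrib)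

lemma big_qexp_q_difference:
  assumes noroot: "\<forall>n::nat. n > 0 \<longrightarrow> q ^ n \<noteq> 1"
  shows "big_qexp q = lin_fps (q - 1) * (big_qexp q oo (fps_const q * fps_X))"
proof (rule fps_ext)
  fix n
  show "fps_nth (big_qexp q) n = fps_nth (lin_fps (q - 1) * (big_qexp q oo (fps_const q * fps_X))) n"
  proof (cases n)
    case (Suc m)
    have "qpoch q m \<noteq> 0" "qpoch q (Suc m) \<noteq> 0" using qpoch_nonzero[OF noroot] by auto
    then have nz: "1 - q ^ Suc m \<noteq> 0" "qpoch q m \<noteq> 0" by (auto simp: qpoch_Suc)
    have "Suc m * m = 2 * m + m * (m - 1)" by (cases m) (simp_all add: algebra_simps)
    then have "Suc m * (Suc m - 1) div 2 = m + m * (m - 1) div 2" by simp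
    then have "fps_nth (big_qexp q) (Suc m) = (1 - q) * q ^ m * fps_nth (big_qexp q) m / (1 - q ^ Suc m)"
      unfolding big_qexp_def using nz by (simp add: qpoch_Suc power_add field_simps)
    then show ?thesis
      unfolding Suc lin_fps_mult_nth fps_compose_linear using nz by (simp add: field_simps)
  qed (simp add: big_qexp_def lin_fps_mult_nth fps_compose_linear)
qed

lemma p_fps_q_mult_y:
  assumes noroot: "\<forall>n::nat. n > 0 \<longrightarrow> q ^ n \<noteq> 1"
  shows "p_fps q (q * y) z = lin_fps ((1 - q) * y) * p_fps q y z"
  unfolding p_fps_eq_qexp[OF noroot] small_qexp_q_mult[OF noroot] by (simp only: mult.assoc)

lemma p_fps_q_mult_z:
  assumes noroot: "\<forall>n::nat. n > 0 \<longrightarrow> q ^ n \<noteq> 1"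
  shows "p_fps q y (q * z) = lin_fps ((1 - q) * z) * p_fps q y z"
  unfolding p_fps_eq_qexp[OF noroot] small_qexp_q_mult[OF noroot] by (simp only: mult_ac)

lemma p_fps_q_mult_yz:
  assumes noroot: "\<forall>n::nat. n > 0 \<longrightarrow> q ^ n \<noteq> 1"
  shows "p_fps q (q * y) (q * z) = lin_fps (q - 1) * (p_fps q y z oo (fps_const q * fps_X))"
proof -
  let ?G = "fps_const q * fps_X"
  have "p_fps q y z oo ?G = small_qexp q (q * y) * (small_qexp q (q * z) * (big_qexp q oo ?G))"
    unfolding p_fps_eq_qexp[OF noroot] by (simp add: fps_compose_mult_distrib small_qexp_compose_linear)
  then have "lin_fps (q - 1) * (p_fps q y z oo ?G)
      = small_qexp q (q * y) * (small_qexp q (q * z) * (lin_fps (q - 1) * (big_qexp q oo ?G)))"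
    by (simp only: mult_ac)
  also have "\<dots> = p_fps q (q * y) (q * z)"
    unfolding p_fps_eq_qexp[OF noroot] big_qexp_q_difference[OF noroot, symmetric] ..
  finally show ?thesis ..
qed

lemma p_fps_nth_0 [simp]: "fps_nth (p_fps q y z) 0 = 1"
  by (simp add: p_fps_def pnat_def qpoch_def)

lemma phinat_eq_stair_det: "phinat q n y z = stair_det (p_fps q y z) n"
  unfolding phinat_def stair_det_def pint_def coeff_int_def p_fps_def fps_nth_Abs_fps ..

lemma p_fps_shifts:
  fixes q y z :: complex
  assumes q0: "q \<noteq> 0" and noroot: "\<forall>n::nat. n > 0 \<longrightarrow> q ^ n \<noteq> 1"
  defines "u \<equiv> p_fps q (y/q) (z/q)"
  shows "p_fps q y (z/q) = lin_fps ((1-q) * (y/q)) * u"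
    and "p_fps q (y/q) z = lin_fps ((1-q) * (z/q)) * u"
    and "p_fps q y z = lin_fps ((1-q) * (y/q)) * (lin_fps ((1-q) * (z/q)) * u)"
    and "p_fps q y (q*z) = lin_fps ((1-q) * z) * p_fps q y z"
    and "p_fps q y z = lin_fps (q - 1) * (u oo (fps_const q * fps_X))"
    and "p_fps q (y/q) z oo (fps_const q * fps_X) = lin_fps ((1-q) * z) * (u oo (fps_const q * fps_X))"
proof -
  show y: "p_fps q y (z/q) = lin_fps ((1-q) * (y/q)) * u"
    using p_fps_q_mult_y[OF noroot, of "y/q" "z/q"] q0 by (simp add: u_def)
  show z: "p_fps q (y/q) z = lin_fps ((1-q) * (z/q)) * u"
    using p_fps_q_mult_z[OF noroot, of "y/q" "z/q"] q0 by (simp add: u_def)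
  show "p_fps q y z = lin_fps ((1-q) * (y/q)) * (lin_fps ((1-q) * (z/q)) * u)"
    using p_fps_q_mult_y[OF noroot, of "y/q" z] q0 z by simp
  show "p_fps q y (q*z) = lin_fps ((1-q) * z) * p_fps q y z"
    by (rule p_fps_q_mult_z[OF noroot])
  show "p_fps q y z = lin_fps (q - 1) * (u oo (fps_const q * fps_X))"
    using p_fps_q_mult_yz[OF noroot, of "y/q" "z/q"] q0 by (simp add: u_def)
  have "p_fps q (y/q) z oo (fps_const q * fps_X)
      = (lin_fps ((1-q) * (z/q)) oo (fps_const q * fps_X)) * (u oo (fps_const q * fps_X))"
    unfolding z by (simp add: fps_compose_mult_distrib)
  then show "p_fps q (y/q) z oo (fps_const q * fps_X) = lin_fps ((1-q) * z) * (u oo (fps_const q * fps_X))"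
    using q0 by (simp add: lin_fps_compose_linear)
qed

lemma one_minus_q_nonzero:
  fixes q :: complex
  assumes "\<forall>n::nat. n > 0 \<longrightarrow> q ^ n \<noteq> 1"
  shows "1 - q \<noteq> 0"
  using assms[rule_format, of 1] by simp

lemma triangular_Suc: "Suc m * (Suc m + 1) div 2 = m * (m + 1) div 2 + Suc m"
  by (induct m) auto

lemma stair_det_p_fps_compose_linear:
  fixes q y z :: complex
  assumes q0: "q \<noteq> 0" and noroot: "\<forall>n::nat. n > 0 \<longrightarrow> q ^ n \<noteq> 1"
  defines "v \<equiv> p_fps q (y/q) (z/q) oo (fps_const q * fps_X)"
  shows "stair_det v k = q ^ (k * (k + 1) div 2) * stair_det (p_fps q (y/q) (z/q)) k"
    and "stair_det (lin_fps (q - 1) * v) k = stair_det (p_fps q y z) k"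
    and "stair_det (lin_fps ((1 - q) * z) * v) k = q ^ (k * (k + 1) div 2) * stair_det (p_fps q (y/q) z) k"
    and "stair_det (lin_fps ((1 - q) * z) * (lin_fps (q - 1) * v)) k = stair_det (p_fps q y (q*z)) k"
proof -
  note shifts = p_fps_shifts(4-6)[OF q0 noroot, where y = y and z = z, symmetric]
  show "stair_det v k = q ^ (k * (k + 1) div 2) * stair_det (p_fps q (y/q) (z/q)) k"
    unfolding v_def by (rule stair_det_compose_linear[OF q0])
  show "stair_det (lin_fps (q - 1) * v) k = stair_det (p_fps q y z) k"
    unfolding v_def shifts(2) ..
  show "stair_det (lin_fps ((1 - q) * z) * v) k = q ^ (k * (k + 1) div 2) * stair_det (p_fps q (y/q) z) k"
    unfolding v_def shifts(3) by (rule stair_det_compose_linear[OF q0])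
  show "stair_det (lin_fps ((1 - q) * z) * (lin_fps (q - 1) * v)) k = stair_det (p_fps q y (q*z)) k"
    unfolding v_def shifts(2) shifts(1) ..
qed

lemma stair_det_p_fps_bilinear_qz:
  fixes q y z :: complex
  assumes q0: "q \<noteq> 0" and noroot: "\<forall>n::nat. n > 0 \<longrightarrow> q ^ n \<noteq> 1"
  shows "stair_det (p_fps q (y/q) z) m * stair_det (p_fps q y z) (Suc m)
         + z * q ^ Suc m * stair_det (p_fps q y z) m * stair_det (p_fps q (y/q) z) (Suc m)
       = (1 + z) * stair_det (p_fps q (y/q) (z/q)) m * stair_det (p_fps q y (q*z)) (Suc m)"
    and "z * stair_det (p_fps q (y/q) z) m * stair_det (p_fps q y z) (Suc m)
         + q ^ Suc m * stair_det (p_fps q y z) m * stair_det (p_fps q (y/q) z) (Suc m)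
       = q ^ Suc m * (1 + z) * stair_det (p_fps q y (q*z)) m * stair_det (p_fps q (y/q) (z/q)) (Suc m)"
proof -
  let ?u = "p_fps q (y/q) (z/q)" and ?T = "m * (m + 1) div 2"
  note compose = stair_det_p_fps_compose_linear[OF q0 noroot, where y = y and z = z]
  have c0: "(1 - q) * q ^ ?T \<noteq> 0" using one_minus_q_nonzero[OF noroot] q0 by simp
  have v0: "fps_nth (?u oo (fps_const q * fps_X)) 0 = 1" by (simp add: fps_compose_linear)
  have "(1 - q) * q ^ ?T * (stair_det (p_fps q (y/q) z) m * stair_det (p_fps q y z) (Suc m)
         + z * q ^ Suc m * stair_det (p_fps q y z) m * stair_det (p_fps q (y/q) z) (Suc m))
      = (1 - q) * q ^ ?T * ((1 + z) * stair_det ?u m * stair_det (p_fps q y (q*z)) (Suc m))"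
    using stair_det_three_term[OF v0, of "(1 - q) * z" m "q - 1"]
    unfolding compose triangular_Suc power_add by (simp add: algebra_simps)
  with c0 q0 show "stair_det (p_fps q (y/q) z) m * stair_det (p_fps q y z) (Suc m)
         + z * q ^ Suc m * stair_det (p_fps q y z) m * stair_det (p_fps q (y/q) z) (Suc m)
       = (1 + z) * stair_det ?u m * stair_det (p_fps q y (q*z)) (Suc m)"
    by simp
  have "(1 - q) * q ^ ?T * (z * stair_det (p_fps q (y/q) z) m * stair_det (p_fps q y z) (Suc m)
         + q ^ Suc m * stair_det (p_fps q y z) m * stair_det (p_fps q (y/q) z) (Suc m))
      = (1 - q) * q ^ ?T * (q ^ Suc m * (1 + z) * stair_det (p_fps q y (q*z)) m * stair_det ?u (Suc m))"
    using stair_det_three_term_dual[OF v0, of "(1 - q) * z" m "q - 1"]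
    unfolding compose triangular_Suc power_add by (simp add: algebra_simps)
  with c0 q0 show "z * stair_det (p_fps q (y/q) z) m * stair_det (p_fps q y z) (Suc m)
         + q ^ Suc m * stair_det (p_fps q y z) m * stair_det (p_fps q (y/q) z) (Suc m)
       = q ^ Suc m * (1 + z) * stair_det (p_fps q y (q*z)) m * stair_det ?u (Suc m)"
    by simp
qed

lemma stair_det_p_fps_bilinear_yz:
  fixes q y z :: complex
  assumes q0: "q \<noteq> 0" and noroot: "\<forall>n::nat. n > 0 \<longrightarrow> q ^ n \<noteq> 1"
  shows "z * stair_det (p_fps q y z) m * stair_det (p_fps q (y/q) (z/q)) (Suc m)
         + y * stair_det (p_fps q (y/q) (z/q)) m * stair_det (p_fps q y z) (Suc m)
       = (y + z) * stair_det (p_fps q (y/q) z) m * stair_det (p_fps q y (z/q)) (Suc m)"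
    and "y * stair_det (p_fps q y z) m * stair_det (p_fps q (y/q) (z/q)) (Suc m)
         + z * stair_det (p_fps q (y/q) (z/q)) m * stair_det (p_fps q y z) (Suc m)
       = (y + z) * stair_det (p_fps q y (z/q)) m * stair_det (p_fps q (y/q) z) (Suc m)"
proof -
  let ?a = "(1 - q) * (y/q)" and ?b = "(1 - q) * (z/q)"
  define u where "u = p_fps q (y/q) (z/q)"
  note shifts = p_fps_shifts[OF q0 noroot, of y z, folded u_def]
  have c0: "(1 - q) / q \<noteq> 0" using one_minus_q_nonzero[OF noroot] q0 by simp
  have u0: "fps_nth u 0 = 1" by (simp add: u_def)
  have yz: "lin_fps ?b * p_fps q y (z/q) = p_fps q y z" "lin_fps ?a * p_fps q (y/q) z = p_fps q y z"
    unfolding shifts(1,2,3) by (rule mult.left_commute, rule refl)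
  have "(1 - q) / q * (z * stair_det (p_fps q y z) m * stair_det u (Suc m)
         + y * stair_det u m * stair_det (p_fps q y z) (Suc m))
      = (1 - q) / q * ((y + z) * stair_det (p_fps q (y/q) z) m * stair_det (p_fps q y (z/q)) (Suc m))"
    using stair_det_three_term_sum[OF u0, of ?b ?a m]
    unfolding shifts(1,2)[symmetric] yz by (simp add: algebra_simps)
  with c0 show "z * stair_det (p_fps q y z) m * stair_det (p_fps q (y/q) (z/q)) (Suc m)
         + y * stair_det (p_fps q (y/q) (z/q)) m * stair_det (p_fps q y z) (Suc m)
       = (y + z) * stair_det (p_fps q (y/q) z) m * stair_det (p_fps q y (z/q)) (Suc m)"
    unfolding u_def by simp
  have "(1 - q) / q * (y * stair_det (p_fps q y z) m * stair_det u (Suc m)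
         + z * stair_det u m * stair_det (p_fps q y z) (Suc m))
      = (1 - q) / q * ((y + z) * stair_det (p_fps q y (z/q)) m * stair_det (p_fps q (y/q) z) (Suc m))"
    using stair_det_three_term_sum[OF u0, of ?a ?b m]
    unfolding shifts(1,2)[symmetric] yz by (simp add: algebra_simps)
  with c0 show "y * stair_det (p_fps q y z) m * stair_det (p_fps q (y/q) (z/q)) (Suc m)
         + z * stair_det (p_fps q (y/q) (z/q)) m * stair_det (p_fps q y z) (Suc m)
       = (y + z) * stair_det (p_fps q y (z/q)) m * stair_det (p_fps q (y/q) z) (Suc m)"
    unfolding u_def by simp
qed

section \<open>The bilinear relations for \<open>\<phi>\<^sub>N\<close>\<close>

lemma phi_nonneg: "0 \<le> N \<Longrightarrow> phi q N y z = stair_det (p_fps q y z) (nat N)"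
  by (simp add: phi_def phinat_eq_stair_det)

lemma phi_neg:
  "N < 0 \<Longrightarrow> phi q N y z = (-1) ^ nat (N * (N + 1) div 2) * stair_det (p_fps q y z) (nat (- N - 1))"
  by (simp add: phi_def phinat_eq_stair_det)

text \<open>The four identities of the theorem with denominators cleared, for \<open>\<Phi> = \<phi>\<^sub>N\<^sub>-\<^sub>1\<close>,
  \<open>\<Psi> = \<phi>\<^sub>N\<close> and \<open>Q = q\<^sup>N\<close>.\<close>

definition bilinear_relations :: "complex \<Rightarrow> complex \<Rightarrow> complex \<Rightarrow> complex
    \<Rightarrow> (complex \<Rightarrow> complex \<Rightarrow> complex) \<Rightarrow> (complex \<Rightarrow> complex \<Rightarrow> complex) \<Rightarrow> bool" where
  "bilinear_relations q Q y z \<Phi> \<Psi> \<longleftrightarrow>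
     \<Phi> (y/q) z * \<Psi> y z + z * Q * \<Phi> y z * \<Psi> (y/q) z = (1 + z) * \<Phi> (y/q) (z/q) * \<Psi> y (q*z)
   \<and> z * \<Phi> (y/q) z * \<Psi> y z + Q * \<Phi> y z * \<Psi> (y/q) z = Q * (1 + z) * \<Phi> y (q*z) * \<Psi> (y/q) (z/q)
   \<and> z * \<Phi> y z * \<Psi> (y/q) (z/q) + y * \<Phi> (y/q) (z/q) * \<Psi> y z = (y + z) * \<Phi> (y/q) z * \<Psi> y (z/q)
   \<and> y * \<Phi> y z * \<Psi> (y/q) (z/q) + z * \<Phi> (y/q) (z/q) * \<Psi> y z = (y + z) * \<Phi> y (z/q) * \<Psi> (y/q) z"

lemma bilinear_relations_stair_det:
  assumes q0: "q \<noteq> 0" and noroot: "\<forall>n::nat. n > 0 \<longrightarrow> q ^ n \<noteq> 1"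
  shows "bilinear_relations q (q ^ Suc m) y z
           (\<lambda>Y Z. stair_det (p_fps q Y Z) m) (\<lambda>Y Z. stair_det (p_fps q Y Z) (Suc m))"
  unfolding bilinear_relations_def
  by (intro conjI stair_det_p_fps_bilinear_qz stair_det_p_fps_bilinear_yz q0 noroot)

lemma bilinear_relations_scale:
  assumes "bilinear_relations q Q y z \<Phi> \<Psi>"
  shows "bilinear_relations q Q y z (\<lambda>Y Z. a * \<Phi> Y Z) (\<lambda>Y Z. b * \<Psi> Y Z)"
proof -
  have scaled: "L = R \<Longrightarrow> a * b * L = a * b * R" for L R :: complex by simp
  note rel = assms[unfolded bilinear_relations_def]
  show ?thesis
    unfolding bilinear_relations_def
    using scaled[OF rel[THEN conjunct1]] scaled[OF rel[THEN conjunct2, THEN conjunct1]]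
      scaled[OF rel[THEN conjunct2, THEN conjunct2, THEN conjunct1]]
      scaled[OF rel[THEN conjunct2, THEN conjunct2, THEN conjunct2]]
    by (simp only: ac_simps distrib_left)
qed

text \<open>Corresponds to the symmetry \<open>\<phi>\<^sub>-\<^sub>N\<^sub>-\<^sub>1 = \<plusminus>\<phi>\<^sub>N\<close>, which turns \<open>q\<^sup>N\<close> into \<open>q\<^sup>-\<^sup>N\<close>
  and exchanges the first two and the last two identities.\<close>

lemma bilinear_relations_swap:
  assumes "bilinear_relations q Q y z \<Phi> \<Psi>" and "Q \<noteq> 0"
  shows "bilinear_relations q (inverse Q) y z \<Psi> \<Phi>"
  using assms unfolding bilinear_relations_def
  by (elim conjE) (intro conjI; simp add: field_simps)

lemma bilinear_relations_phi:
  fixes q y z :: complex and N :: int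
  assumes q0: "q \<noteq> 0" and noroot: "\<forall>n::nat. n > 0 \<longrightarrow> q ^ n \<noteq> 1"
  shows "bilinear_relations q (q powi N) y z (phi q (N - 1)) (phi q N)"
proof -
  note stair = bilinear_relations_stair_det[OF q0 noroot]
  consider (pos) m where "N = int (Suc m)" | (zero) "N = 0" | (neg) m where "N = - int (Suc m)"
    by (metis int_cases2 not0_implies_Suc of_nat_0 add.inverse_neutral)
  then show ?thesis
  proof cases
    case pos
    then have "nat N = Suc m" "nat (N - 1) = m" "0 \<le> N" "0 \<le> N - 1" by auto
    then have "phi q (N - 1) = (\<lambda>Y Z. stair_det (p_fps q Y Z) m)"
      "phi q N = (\<lambda>Y Z. stair_det (p_fps q Y Z) (Suc m))"
      by (simp_all add: fun_eq_iff phi_nonneg)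
    moreover have "q powi N = q ^ Suc m"
      unfolding pos by (rule power_int_of_nat)
    ultimately show ?thesis using stair by simp
  next
    case zero
    then have "phi q (N - 1) = (\<lambda>_ _. 1)" "phi q N = (\<lambda>_ _. 1)"
      by (simp_all add: fun_eq_iff phi_def phinat_eq_stair_det)
    with zero show ?thesis by (simp add: bilinear_relations_def algebra_simps)
  next
    case neg
    from neg have "N < 0" "N - 1 < 0" "nat (- N - 1) = m" "nat (- (N - 1) - 1) = Suc m" by auto
    then have "phi q (N - 1) = (\<lambda>Y Z. (-1) ^ nat ((N - 1) * (N - 1 + 1) div 2) * stair_det (p_fps q Y Z) (Suc m))"
      "phi q N = (\<lambda>Y Z. (-1) ^ nat (N * (N + 1) div 2) * stair_det (p_fps q Y Z) m)"
      by (simp_all add: fun_eq_iff phi_neg del: of_nat_Suc)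
    moreover have "q powi N = inverse (q ^ Suc m)"
      using neg by (simp add: power_int_minus power_int_of_nat del: of_nat_Suc)
    ultimately show ?thesis
      using bilinear_relations_scale[OF bilinear_relations_swap[OF stair]] q0 by simp
  qed
qed

theorem proposition1:
  fixes q y z :: complex and N :: int
  assumes hq0: "q \<noteq> 0"
    and hqroot: "\<forall>n::nat. n > 0 \<longrightarrow> q ^ n \<noteq> 1"
    and hy: "y \<noteq> 0" and hz: "z \<noteq> 0"
    and d1: "phi q (N - 1) (y / q) z \<noteq> 0"
    and d2: "phi q N y z \<noteq> 0"
    and d3: "phi q (N - 1) y z \<noteq> 0"
    and d4: "phi q N (y / q) (z / q) \<noteq> 0"
  shows "let f0 = q powi N * (phi q (N - 1) y z * phi q N (y / q) z)
                  / (phi q (N - 1) (y / q) z * phi q N y z);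
             f1 = (phi q (N - 1) (y / q) (z / q) * phi q N y z)
                  / (phi q (N - 1) y z * phi q N (y / q) (z / q))
         in 1 + z * f0 = (1 + z) * (phi q (N - 1) (y / q) (z / q) * phi q N y (q * z))
                          / (phi q (N - 1) (y / q) z * phi q N y z)
          \<and> 1 + (1 / z) * f0 = q powi N * (1 + 1 / z) * (phi q (N - 1) y (q * z) * phi q N (y / q) (z / q))
                          / (phi q (N - 1) (y / q) z * phi q N y z)
          \<and> 1 + (y / z) * f1 = (1 + y / z) * (phi q (N - 1) (y / q) z * phi q N y (z / q))
                          / (phi q (N - 1) y z * phi q N (y / q) (z / q))
          \<and> 1 + (z / y) * f1 = (1 + z / y) * (phi q (N - 1) y (z / q) * phi q N (y / q) z)
                          / (phi q (N - 1) y z * phi q N (y / q) (z / q))"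
  using bilinear_relations_phi[OF hq0 hqroot, where y = y and z = z and N = N] d1 d2 d3 d4 hy hz
  unfolding bilinear_relations_def Let_def by (simp add: field_simps)

end
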